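(* Let $f\in L^1(\Omega)$ with $f\ge0$, $f\not\equiv0$, and let $u\ge0$ be an entropy solution of $(-\Delta)^s_{p,\beta}u=f$ in $\Omega$, $u=0$ in $\mathbb R^N\setminus\Omega$. Then for every $w\in W^{s,p}_{\beta,0}(\Omega)\cap L^\infty(\Omega)$ such that $w\equiv0$ on the set $\{u>k\}$ for some $k>0$, we have $$\frac12\iint_{D_\Omega}|u(x)-u(y)|^{p-2}(u(x)-u(y))(w(x)-w(y))\,d\nu=\int_\Omega f\,w\,dx.$$
   Context: Standing assumptions: $s\in(0,1)$, $1<p<N$, $ps<N$, $0\le\beta<\frac{N-ps}{2}$, and $\Omega\subset\mathbb R^N$ is a smooth bounded domain containing the origin. Set $d\mu=|x|^{-2\beta}dx$ and $d\nu=\frac{dx\,dy}{|x-y|^{N+ps}|x|^\beta|y|^\beta}$. $D_\Omega=(\mathbb R^N\times\mathbb R^N)\setminus\big((\mathbb R^N\setminus\Omega)\times(\mathbb R^N\setminus\Omega)\big)$. $W^{s,p}_{\beta,0}(\Omega)$ is the closure of $C_c^\infty(\Omega)$ under the norm $(\int_\Omega|\phi|^pd\mu)^{1/p}+(\int_\Omega\int_\Omega|\phi(x)-\phi(y)|^pd\nu)^{1/p}$; its elements are extended by $0$ outside $\Omega$. For $k>0$, $T_k(a)=\max\{-k,\min\{k,a\}\}$. Entropy solution: given $f\in L^1(\Omega)$, a measurable $u$ vanishing outside $\Omega$ with $T_k(u)\in W^{s,p}_{\beta,0}(\Omega)$ for all $k>0$ is an entropy solution if (i) $\iint_{R_h}|u(x)-u(y)|^{p-1}d\nu\to0$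 as $h\to\infty$, where $R_h=\{(x,y)\in\mathbb R^N\times\mathbb R^N:\ h+1\le\max\{|u(x)|,|u(y)|\}$ and ($\min\{|u(x)|,|u(y)|\}\le h$ or $u(x)u(y)<0$)$\}$; and (ii) for all $k>0$ and all $\varphi\in W^{s,p}_{\beta,0}(\Omega)\cap L^\infty(\Omega)$, $\frac12\iint_{D_\Omega}|u(x)-u(y)|^{p-2}(u(x)-u(y))[T_k(u(x)-\varphi(x))-T_k(u(y)-\varphi(y))]d\nu\le\int_\Omega f\,T_k(u-\varphi)\,dx$. *)

theory Defs
  imports "HOL-Analysis.Analysis"
begin

coinductive smooth_fun :: "('a::euclidean_space \<Rightarrow> real) \<Rightarrow> bool" where
  "(\<And>x. f differentiable (at x)) \<Longrightarrow>
   (\<forall>b\<in>Basis. smooth_fun (\<lambda>x. frechet_derivative f (at x) b)) \<Longrightarrow> smooth_fun f"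

definition smooth_bounded_domain :: "'a::euclidean_space set \<Rightarrow> bool" where
  "smooth_bounded_domain \<Omega> \<longleftrightarrow> open \<Omega> \<and> connected \<Omega> \<and> bounded \<Omega> \<and> \<Omega> \<noteq> {} \<and>
     (\<exists>\<rho>. smooth_fun \<rho> \<and> \<Omega> = {x. \<rho> x < 0} \<and>
          (\<forall>x. \<rho> x = 0 \<longrightarrow> frechet_derivative \<rho> (at x) \<noteq> (\<lambda>v. 0)))"

definition Cc_inf :: "'a::euclidean_space set \<Rightarrow> ('a \<Rightarrow> real) set" where
  "Cc_inf \<Omega> = {\<phi>. smooth_fun \<phi> \<and> compact (closure {x. \<phi> x \<noteq> 0}) \<and>
                    closure {x. \<phi> x \<noteq> 0} \<subseteq> \<Omega>}"

definition mu_meas :: "real \<Rightarrow> 'a::euclidean_space measure" where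
  "mu_meas \<beta> = density lebesgue (\<lambda>x. ennreal (norm x powr (-2 * \<beta>)))"

definition nu_meas :: "real \<Rightarrow> real \<Rightarrow> real \<Rightarrow> ('a::euclidean_space \<times> 'a) measure" where
  "nu_meas s p \<beta> = density (lebesgue \<Otimes>\<^sub>M lebesgue)
     (\<lambda>(x, y). ennreal (1 / (norm (x - y) powr (real DIM('a) + p * s)
                              * norm x powr \<beta> * norm y powr \<beta>)))"

definition D_Omega :: "'a set \<Rightarrow> ('a \<times> 'a) set" where
  "D_Omega \<Omega> = UNIV - ((UNIV - \<Omega>) \<times> (UNIV - \<Omega>))"

text \<open>W^{s,p}_{beta,0}(Omega): closure of C_c^infinity(Omega) w.r.t. the norm
  (int_Omega |phi|^p dmu)^(1/p) + (int_Omega int_Omega |phi x - phi y|^p dnu)^(1/p),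
  elements extended by zero outside Omega.  Convergence in this norm is expressed as
  convergence to 0 of both p-th power integrals.\<close>
definition Wspace :: "real \<Rightarrow> real \<Rightarrow> real \<Rightarrow> 'a::euclidean_space set \<Rightarrow> ('a \<Rightarrow> real) set" where
  "Wspace s p \<beta> \<Omega> = {v. v \<in> borel_measurable lebesgue \<and> (\<forall>x. x \<notin> \<Omega> \<longrightarrow> v x = 0) \<and>
     (\<exists>\<phi>::nat \<Rightarrow> 'a \<Rightarrow> real. (\<forall>n. \<phi> n \<in> Cc_inf \<Omega>) \<and>
        (\<lambda>n. \<integral>\<^sup>+ x. ennreal (\<bar>\<phi> n x - v x\<bar> powr p) * indicator \<Omega> x \<partial>(mu_meas \<beta>))
           \<longlonglongrightarrow> 0 \<and>
        (\<lambda>n. \<integral>\<^sup>+ z. ennreal (\<bar>(\<phi> n (fst z) - v (fst z)) - (\<phi> n (snd z) - v (snd z))\<bar> powr p)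
                     * indicator (\<Omega> \<times> \<Omega>) z \<partial>(nu_meas s p \<beta>)) \<longlonglongrightarrow> 0)}"

definition ess_bounded :: "('a::euclidean_space \<Rightarrow> real) \<Rightarrow> bool" where
  "ess_bounded v \<longleftrightarrow> (\<exists>C. AE x in lebesgue. \<bar>v x\<bar> \<le> C)"

definition trunc :: "real \<Rightarrow> real \<Rightarrow> real" where
  "trunc k a = max (- k) (min k a)"

definition R_set :: "('a \<Rightarrow> real) \<Rightarrow> real \<Rightarrow> ('a \<times> 'a) set" where
  "R_set u h = {(x, y). h + 1 \<le> max \<bar>u x\<bar> \<bar>u y\<bar> \<and>
                        (min \<bar>u x\<bar> \<bar>u y\<bar> \<le> h \<or> u x * u y < 0)}"

definition ppow :: "real \<Rightarrow> real \<Rightarrow> real" where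
  "ppow p a = \<bar>a\<bar> powr (p - 2) * a"

definition entropy_solution ::
  "real \<Rightarrow> real \<Rightarrow> real \<Rightarrow> 'a::euclidean_space set \<Rightarrow> ('a \<Rightarrow> real) \<Rightarrow> ('a \<Rightarrow> real) \<Rightarrow> bool" where
  "entropy_solution s p \<beta> \<Omega> f u \<longleftrightarrow>
     u \<in> borel_measurable lebesgue \<and> (\<forall>x. x \<notin> \<Omega> \<longrightarrow> u x = 0) \<and>
     (\<forall>k>0. (\<lambda>x. trunc k (u x)) \<in> Wspace s p \<beta> \<Omega>) \<and>
     ((\<lambda>h. \<integral>\<^sup>+ z. ennreal (\<bar>u (fst z) - u (snd z)\<bar> powr (p - 1)) * indicator (R_set u h) z
              \<partial>(nu_meas s p \<beta>)) \<longlongrightarrow> 0) at_top \<and>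
     (\<forall>k>0. \<forall>\<phi>\<in>Wspace s p \<beta> \<Omega>. ess_bounded \<phi> \<longrightarrow>
        (let g = (\<lambda>z. ppow p (u (fst z) - u (snd z)) *
                   (trunc k (u (fst z) - \<phi> (fst z)) - trunc k (u (snd z) - \<phi> (snd z))))
         in set_integrable (nu_meas s p \<beta>) (D_Omega \<Omega>) g \<and>
            1 / 2 * (LINT z : D_Omega \<Omega> | nu_meas s p \<beta>. g z)
              \<le> (LINT x : \<Omega> | lebesgue. f x * trunc k (u x - \<phi> x))))"

end

theory Submission
  imports Defs
begin

text \<open>Test the entropy inequality with \<open>\<phi> = T\<^sub>K u - w\<close> for \<open>K \<ge> k\<close>, at a truncation level
  \<open>M \<ge> \<parallel>w\<parallel>\<^sub>\<infinity>\<close>. Because \<open>w\<close> vanishes where \<open>u > k\<close>, one has \<open>T\<^sub>M (u - \<phi>) = w + H\<^sub>K\<close>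
  with \<open>H\<^sub>K = T\<^sub>M (u - T\<^sub>K u)\<close> a nondecreasing function of \<open>u\<close>; hence the pairing of \<open>u\<close> with
  \<open>H\<^sub>K\<close> is nonnegative and \<open>1/2 \<langle>u, w\<rangle> \<le> \<integral> f w + \<integral> f H\<^sub>K\<close>. The last term tends to \<open>0\<close>
  as \<open>K \<rightarrow> \<infinity>\<close> by dominated convergence, and the same argument applied to \<open>-w\<close> gives
  equality.\<close>

lemma sigma_finite_lebesgue: "sigma_finite_measure (lebesgue :: 'a::euclidean_space measure)"
proof -
  obtain A :: "'a set set" where "countable A" "A \<subseteq> sets lborel" "\<Union>A = space lborel"
    "\<forall>a\<in>A. emeasure lborel a \<noteq> \<infinity>"
    using lborel.sigma_finite_countable by blast
  then show ?thesis
    by (intro sigma_finite_measure.intro exI[of _ A]) (auto simp: subset_eq)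
qed

lemma AE_pair_measure_fst_snd:
  assumes "sigma_finite_measure M" and "AE x in M. P x"
  shows "AE z in M \<Otimes>\<^sub>M M. P (fst z) \<and> P (snd z)"
proof -
  interpret sigma_finite_measure M by fact
  obtain N where N: "N \<in> null_sets M" "{x \<in> space M. \<not> P x} \<subseteq> N"
    using assms(2) unfolding eventually_ae_filter by auto
  have "N \<times> space M \<in> null_sets (M \<Otimes>\<^sub>M M)" "space M \<times> N \<in> null_sets (M \<Otimes>\<^sub>M M)"
    using N(1) by (auto intro: times_in_null_sets1 times_in_null_sets2)
  from AE_not_in[OF this(1)] AE_not_in[OF this(2)] AE_space show ?thesis
    by eventually_elim (use N in \<open>auto simp: space_pair_measure\<close>)
qed

lemma borel_measurable_nu_kernel:
  "(\<lambda>(x::'a::euclidean_space, y). ennreal (1 / (norm (x - y) powr (real DIM('a) + p * s)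
     * norm x powr \<beta> * norm y powr \<beta>))) \<in> borel_measurable (lebesgue \<Otimes>\<^sub>M lebesgue)"
proof -
  have "(\<lambda>x. x) \<in> lebesgue \<rightarrow>\<^sub>M (borel :: 'a measure)"
    by (rule measurable_completion) simp
  then have [measurable]: "fst \<in> lebesgue \<Otimes>\<^sub>M lebesgue \<rightarrow>\<^sub>M (borel :: 'a measure)"
    "snd \<in> lebesgue \<Otimes>\<^sub>M lebesgue \<rightarrow>\<^sub>M (borel :: 'a measure)"
    using measurable_compose[OF measurable_fst] measurable_compose[OF measurable_snd] by auto
  show ?thesis by measurable
qed

lemma sets_mu_meas [simp]: "sets (mu_meas \<beta>) = sets lebesgue"
  by (simp add: mu_meas_def)

lemma measurable_mu_meas [simp]: "g \<in> measurable (mu_meas \<beta>) N \<longleftrightarrow> g \<in> measurable lebesgue N"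
  by (simp add: mu_meas_def)

lemma sets_nu_meas [simp]: "sets (nu_meas s p \<beta>) = sets (lebesgue \<Otimes>\<^sub>M lebesgue)"
  by (simp add: nu_meas_def)

lemma measurable_nu_meas [simp]:
  "g \<in> measurable (nu_meas s p \<beta>) N \<longleftrightarrow> g \<in> measurable (lebesgue \<Otimes>\<^sub>M lebesgue) N"
  by (simp add: nu_meas_def)

lemma AE_nu_meas:
  assumes "AE x in lebesgue. P x"
  shows "AE z in nu_meas s p \<beta>. P (fst z) \<and> P (snd z)"
proof -
  have "AE z in lebesgue \<Otimes>\<^sub>M lebesgue. P (fst z) \<and> P (snd z)"
    by (rule AE_pair_measure_fst_snd[OF sigma_finite_lebesgue assms])
  then show ?thesis
    unfolding nu_meas_def AE_density[OF borel_measurable_nu_kernel] by (rule eventually_mono) simp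
qed

lemma D_Omega_in_sets:
  assumes "\<Omega> \<in> sets lebesgue"
  shows "D_Omega \<Omega> \<in> sets (nu_meas s p \<beta>)"
proof -
  have "UNIV - \<Omega> \<in> sets lebesgue" using sets.compl_sets[OF assms] by simp
  then have "(UNIV - \<Omega>) \<times> (UNIV - \<Omega>) \<in> sets (lebesgue \<Otimes>\<^sub>M lebesgue)" by simp
  from sets.compl_sets[OF this] show ?thesis
    by (simp add: D_Omega_def space_pair_measure)
qed

lemma frechet_derivative_diff_at:
  assumes "f differentiable (at x)" and "g differentiable (at x)"
  shows "frechet_derivative (\<lambda>x. f x - g x) (at x)
           = (\<lambda>v. frechet_derivative f (at x) v - frechet_derivative g (at x) v)"
  using has_derivative_diff[OF assms[unfolded frechet_derivative_works]]
  by (rule frechet_derivative_at[symmetric])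

lemma smooth_fun_const: "smooth_fun (\<lambda>x. c)"
  by (coinduction arbitrary: c rule: smooth_fun.coinduct) auto

lemma smooth_fun_diff:
  assumes "smooth_fun f" and "smooth_fun g"
  shows "smooth_fun (\<lambda>x. f x - g x)"
  using assms
proof (coinduction arbitrary: f g rule: smooth_fun.coinduct)
  case (smooth_fun f g)
  then have diff: "\<And>x. f differentiable (at x)" "\<And>x. g differentiable (at x)"
    and partials: "\<forall>b\<in>Basis. smooth_fun (\<lambda>x. frechet_derivative f (at x) b)"
      "\<forall>b\<in>Basis. smooth_fun (\<lambda>x. frechet_derivative g (at x) b)"
    by (auto elim: smooth_fun.cases)
  show ?case
  proof (rule exI[of _ "\<lambda>x. f x - g x"], intro conjI refl allI ballI disjI1)
    show "(\<lambda>x. f x - g x) differentiable (at x)" for x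
      using diff by (rule differentiable_diff)
  next
    fix b :: 'a assume "b \<in> Basis"
    with partials diff
    show "\<exists>f' g'. (\<lambda>x. frechet_derivative (\<lambda>x. f x - g x) (at x) b) = (\<lambda>x. f' x - g' x)
                  \<and> smooth_fun f' \<and> smooth_fun g'"
      by (intro exI[of _ "\<lambda>x. frechet_derivative f (at x) b"]
                exI[of _ "\<lambda>x. frechet_derivative g (at x) b"]) (simp add: frechet_derivative_diff_at)
  qed
qed

lemma smooth_fun_borel_measurable: "smooth_fun f \<Longrightarrow> f \<in> borel_measurable lebesgue"
proof -
  assume "smooth_fun f"
  then have "continuous_on UNIV f"
    by (metis smooth_fun.cases continuous_at_imp_continuous_on differentiable_imp_continuous_within)
  then show ?thesis
    using continuous_imp_measurable_on_sets_lebesgue[of UNIV f] by (simp add: lebesgue_on_UNIV_eq)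
qed

lemma Cc_inf_const_zero: "(\<lambda>x. 0) \<in> Cc_inf \<Omega>"
  by (simp add: Cc_inf_def smooth_fun_const)

lemma Cc_inf_diff:
  assumes f: "f \<in> Cc_inf \<Omega>" and g: "g \<in> Cc_inf \<Omega>"
  shows "(\<lambda>x. f x - g x) \<in> Cc_inf \<Omega>"
proof -
  let ?F = "closure {x. f x \<noteq> 0}" and ?G = "closure {x. g x \<noteq> 0}"
  have "{x. f x - g x \<noteq> 0} \<subseteq> {x. f x \<noteq> 0} \<union> {x. g x \<noteq> 0}" by auto
  then have supp: "closure {x. f x - g x \<noteq> 0} \<subseteq> ?F \<union> ?G"
    by (metis closure_Un closure_mono)
  have "compact (?F \<union> ?G)" using f g by (auto simp: Cc_inf_def)
  then have "compact (closure {x. f x - g x \<noteq> 0} \<inter> (?F \<union> ?G))"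
    by (intro closed_Int_compact closed_closure)
  then have "compact (closure {x. f x - g x \<noteq> 0})"
    using supp by (simp add: Int_absorb2)
  moreover have "?F \<union> ?G \<subseteq> \<Omega>" using f g by (auto simp: Cc_inf_def)
  ultimately show ?thesis
    using supp f g by (auto simp: Cc_inf_def intro: smooth_fun_diff)
qed

lemma abs_diff_powr_le:
  fixes x y p :: real
  assumes "0 < p"
  shows "\<bar>x - y\<bar> powr p \<le> 2 powr p * (\<bar>x\<bar> powr p + \<bar>y\<bar> powr p)"
proof -
  define m where "m = max \<bar>x\<bar> \<bar>y\<bar>"
  have "\<bar>x - y\<bar> powr p \<le> (2 * m) powr p"
    using assms by (intro powr_mono2) (auto simp: m_def)
  also have "\<dots> = 2 powr p * m powr p"
    by (simp add: m_def powr_mult)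
  also have "\<dots> \<le> 2 powr p * (\<bar>x\<bar> powr p + \<bar>y\<bar> powr p)"
    by (auto simp: m_def max_def)
  finally show ?thesis .
qed

lemma tendsto_nn_integral_powr_diff:
  fixes X Y :: "nat \<Rightarrow> 'b \<Rightarrow> real"
  assumes "0 < p"
    and [measurable]: "\<And>n. X n \<in> borel_measurable M" "\<And>n. Y n \<in> borel_measurable M" "S \<in> sets M"
    and X: "(\<lambda>n. \<integral>\<^sup>+ z. ennreal (\<bar>X n z\<bar> powr p) * indicator S z \<partial>M) \<longlonglongrightarrow> 0"
    and Y: "(\<lambda>n. \<integral>\<^sup>+ z. ennreal (\<bar>Y n z\<bar> powr p) * indicator S z \<partial>M) \<longlonglongrightarrow> 0"
  shows "(\<lambda>n. \<integral>\<^sup>+ z. ennreal (\<bar>X n z - Y n z\<bar> powr p) * indicator S z \<partial>M) \<longlonglongrightarrow> 0"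
proof (rule tendsto_sandwich[OF _ _ tendsto_const])
  let ?I = "\<lambda>F n. \<integral>\<^sup>+ z. ennreal (\<bar>F n z\<bar> powr p) * indicator S z \<partial>M"
  have pointwise: "ennreal (\<bar>X n z - Y n z\<bar> powr p) * indicator S z
      \<le> ennreal (2 powr p) * (ennreal (\<bar>X n z\<bar> powr p) * indicator S z
                               + ennreal (\<bar>Y n z\<bar> powr p) * indicator S z)" for n z
  proof -
    have "ennreal (\<bar>X n z - Y n z\<bar> powr p) \<le> ennreal (2 powr p * (\<bar>X n z\<bar> powr p + \<bar>Y n z\<bar> powr p))"
      by (rule ennreal_leI abs_diff_powr_le[OF assms(1)])+
    then show ?thesis
      by (simp add: indicator_def ennreal_mult ennreal_plus)
  qed
  have "(\<integral>\<^sup>+ z. ennreal (\<bar>X n z - Y n z\<bar> powr p) * indicator S z \<partial>M)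
      \<le> (\<integral>\<^sup>+ z. ennreal (2 powr p) * (ennreal (\<bar>X n z\<bar> powr p) * indicator S z
                                       + ennreal (\<bar>Y n z\<bar> powr p) * indicator S z) \<partial>M)" for n
    by (intro nn_integral_mono pointwise)
  also have "\<dots> n = ennreal (2 powr p) * (?I X n + ?I Y n)" for n
    by (simp add: nn_integral_cmult nn_integral_add)
  finally show "\<forall>\<^sub>F n in sequentially. (\<integral>\<^sup>+ z. ennreal (\<bar>X n z - Y n z\<bar> powr p) * indicator S z \<partial>M)
      \<le> ennreal (2 powr p) * (?I X n + ?I Y n)"
    by simp
  have "(\<lambda>n. ennreal (2 powr p) * (?I X n + ?I Y n)) \<longlonglongrightarrow> ennreal (2 powr p) * (0 + 0)"
    by (intro ennreal_tendsto_cmult tendsto_add X Y) simp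
  then show "(\<lambda>n. ennreal (2 powr p) * (?I X n + ?I Y n)) \<longlonglongrightarrow> 0"
    by simp
qed simp

lemma Wspace_const_zero: "(\<lambda>x. 0) \<in> Wspace s p \<beta> \<Omega>"
  unfolding Wspace_def
  by (intro CollectI conjI exI[of _ "\<lambda>n x. 0"] allI impI) (auto simp: Cc_inf_const_zero)

lemma Wspace_diff:
  fixes a b :: "'a::euclidean_space \<Rightarrow> real"
  assumes p: "0 < p" and [measurable]: "\<Omega> \<in> sets lebesgue"
    and a: "a \<in> Wspace s p \<beta> \<Omega>" and b: "b \<in> Wspace s p \<beta> \<Omega>"
  shows "(\<lambda>x. a x - b x) \<in> Wspace s p \<beta> \<Omega>"
proof -
  obtain \<phi> where \<phi>: "\<And>n. \<phi> n \<in> Cc_inf \<Omega>"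
    "(\<lambda>n. \<integral>\<^sup>+ x. ennreal (\<bar>\<phi> n x - a x\<bar> powr p) * indicator \<Omega> x \<partial>mu_meas \<beta>) \<longlonglongrightarrow> 0"
    "(\<lambda>n. \<integral>\<^sup>+ z. ennreal (\<bar>(\<phi> n (fst z) - a (fst z)) - (\<phi> n (snd z) - a (snd z))\<bar> powr p)
              * indicator (\<Omega> \<times> \<Omega>) z \<partial>nu_meas s p \<beta>) \<longlonglongrightarrow> 0"
    and [measurable]: "a \<in> borel_measurable lebesgue" and a0: "\<forall>x. x \<notin> \<Omega> \<longrightarrow> a x = 0"
    using a unfolding Wspace_def by blast
  obtain \<psi> where \<psi>: "\<And>n. \<psi> n \<in> Cc_inf \<Omega>"
    "(\<lambda>n. \<integral>\<^sup>+ x. ennreal (\<bar>\<psi> n x - b x\<bar> powr p) * indicator \<Omega> x \<partial>mu_meas \<beta>) \<longlonglongrightarrow> 0"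
    "(\<lambda>n. \<integral>\<^sup>+ z. ennreal (\<bar>(\<psi> n (fst z) - b (fst z)) - (\<psi> n (snd z) - b (snd z))\<bar> powr p)
              * indicator (\<Omega> \<times> \<Omega>) z \<partial>nu_meas s p \<beta>) \<longlonglongrightarrow> 0"
    and [measurable]: "b \<in> borel_measurable lebesgue" and b0: "\<forall>x. x \<notin> \<Omega> \<longrightarrow> b x = 0"
    using b unfolding Wspace_def by blast
  have [measurable]: "\<phi> n \<in> borel_measurable lebesgue" "\<psi> n \<in> borel_measurable lebesgue" for n
    using \<phi>(1) \<psi>(1) by (auto simp: Cc_inf_def intro: smooth_fun_borel_measurable)
  have "(\<lambda>n. \<integral>\<^sup>+ x. ennreal (\<bar>(\<phi> n x - a x) - (\<psi> n x - b x)\<bar> powr p) * indicator \<Omega> x \<partial>mu_meas \<beta>)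
        \<longlonglongrightarrow> 0"
    by (rule tendsto_nn_integral_powr_diff[OF p _ _ _ \<phi>(2) \<psi>(2)]) simp_all
  moreover have "(\<lambda>n. \<integral>\<^sup>+ z. ennreal (\<bar>((\<phi> n (fst z) - a (fst z)) - (\<phi> n (snd z) - a (snd z)))
                  - ((\<psi> n (fst z) - b (fst z)) - (\<psi> n (snd z) - b (snd z)))\<bar> powr p)
               * indicator (\<Omega> \<times> \<Omega>) z \<partial>nu_meas s p \<beta>) \<longlonglongrightarrow> 0"
    by (rule tendsto_nn_integral_powr_diff[OF p _ _ _ \<phi>(3) \<psi>(3)])
       (simp_all, measurable)
  ultimately show ?thesis
    unfolding Wspace_def using a0 b0 \<phi>(1) \<psi>(1)
    by (intro CollectI conjI exI[of _ "\<lambda>n x. \<phi> n x - \<psi> n x"] allI impI)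
       (simp_all add: Cc_inf_diff algebra_simps)
qed

lemma trunc_eq_self: "\<bar>a\<bar> \<le> k \<Longrightarrow> trunc k a = a"
  by (simp add: trunc_def)

lemma abs_trunc_le: "0 \<le> k \<Longrightarrow> \<bar>trunc k a\<bar> \<le> k"
  by (simp add: trunc_def)

lemma trunc_mono: "a \<le> b \<Longrightarrow> trunc k a \<le> trunc k b"
  by (simp add: trunc_def)

lemma mono_trunc_tail: "0 \<le> K \<Longrightarrow> mono (\<lambda>a. trunc M (a - trunc K a))"
  by (rule monoI, rule trunc_mono) (auto simp: trunc_def)

lemma borel_measurable_trunc [measurable]:
  "g \<in> borel_measurable M \<Longrightarrow> (\<lambda>x. trunc c (g x)) \<in> borel_measurable M"
  unfolding trunc_def by (intro borel_measurable_max borel_measurable_min borel_measurable_const)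

lemma borel_measurable_ppow [measurable]:
  "g \<in> borel_measurable M \<Longrightarrow> (\<lambda>x. ppow p (g x)) \<in> borel_measurable M"
  unfolding ppow_def by measurable

lemma ppow_mult_mono_nonneg:
  assumes "mono G"
  shows "0 \<le> ppow p (a - b) * (G a - G b)"
proof -
  have "0 \<le> (a - b) * (G a - G b)"
    using assms by (cases "a \<le> b") (auto simp: mono_def intro: mult_nonpos_nonpos)
  then show ?thesis
    unfolding ppow_def by (simp add: mult.assoc)
qed

lemma trunc_test_function_eq:
  assumes "0 \<le> u" "\<bar>w\<bar> \<le> M" "k < u \<longrightarrow> w = 0" "k \<le> K"
  shows "trunc M (u - (trunc K u - w)) = w + trunc M (u - trunc K u)"
proof (cases "u \<le> k")
  case True
  then show ?thesis using assms by (simp add: trunc_def)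
next
  case False
  then show ?thesis using assms by simp
qed

lemma set_integrable_mult_bounded:
  fixes f G :: "'a \<Rightarrow> real"
  assumes f: "set_integrable M A f" and [measurable]: "G \<in> borel_measurable M"
    and bound: "AE x in M. \<bar>G x\<bar> \<le> B"
  shows "set_integrable M A (\<lambda>x. f x * G x)"
proof -
  have int: "integrable M (\<lambda>x. indicator A x *\<^sub>R f x)"
    using f by (simp add: set_integrable_def)
  then have [measurable]: "(\<lambda>x. indicator A x *\<^sub>R f x) \<in> borel_measurable M"
    by (rule borel_measurable_integrable)
  have "integrable M (\<lambda>x. (indicator A x *\<^sub>R f x) * G x)"
  proof (rule Bochner_Integration.integrable_bound[OF integrable_mult_right[OF int, of B]])
    show "AE x in M. norm ((indicator A x *\<^sub>R f x) * G x) \<le> norm (B * (indicator A x *\<^sub>R f x))"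
      using bound
    proof eventually_elim
      case (elim x)
      then have "\<bar>indicator A x *\<^sub>R f x\<bar> * \<bar>G x\<bar> \<le> \<bar>indicator A x *\<^sub>R f x\<bar> * \<bar>B\<bar>"
        by (intro mult_left_mono) auto
      then show ?case
        by (simp add: abs_mult mult.commute)
    qed
  qed measurable
  then show ?thesis
    by (simp add: set_integrable_def mult.assoc)
qed

lemma set_integral_mult_cong_AE:
  fixes f G H :: "'a \<Rightarrow> real"
  assumes "set_integrable M A f" "G \<in> borel_measurable M" "H \<in> borel_measurable M"
    and "AE x in M. G x = H x"
  shows "(LINT x:A|M. f x * G x) = (LINT x:A|M. f x * H x)"
proof -
  have "(\<lambda>x. indicator A x *\<^sub>R f x) \<in> borel_measurable M"
    using assms(1) by (simp add: set_integrable_def borel_measurable_integrable)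
  then have "integral\<^sup>L M (\<lambda>x. (indicator A x *\<^sub>R f x) * G x) = integral\<^sup>L M (\<lambda>x. (indicator A x *\<^sub>R f x) * H x)"
    using assms(2-4) by (intro integral_cong_AE) (auto elim: eventually_mono)
  then show ?thesis
    by (simp add: set_lebesgue_integral_def mult.assoc)
qed

lemma set_integral_eq_diff_AE:
  fixes f g h :: "'a \<Rightarrow> real"
  assumes "A \<in> sets M"
    and [measurable]: "f \<in> borel_measurable M" "g \<in> borel_measurable M" "h \<in> borel_measurable M"
    and g: "set_integrable M A g" and h: "set_integrable M A h"
    and sum: "AE x in M. g x = f x + h x"
  shows "set_integrable M A f" and "(LINT x:A|M. f x) = (LINT x:A|M. g x) - (LINT x:A|M. h x)"
proof -
  have diff: "set_integrable M A (\<lambda>x. g x - h x)"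
    using g h by (rule set_integral_diff(1))
  have eq: "AE x\<in>A in M. f x = g x - h x"
    using sum by (auto elim: eventually_mono)
  show "set_integrable M A f"
    using set_integrable_cong_AE[OF _ _ eq assms(1)] diff by simp
  have "(LINT x:A|M. f x) = (LINT x:A|M. g x - h x)"
    using assms(1) eq by (intro set_lebesgue_integral_cong_AE) simp_all
  also have "\<dots> = (LINT x:A|M. g x) - (LINT x:A|M. h x)"
    using g h by (rule set_integral_diff(2))
  finally show "(LINT x:A|M. f x) = (LINT x:A|M. g x) - (LINT x:A|M. h x)" .
qed

lemma tendsto_set_integral_trunc_tail:
  fixes f u :: "'a \<Rightarrow> real" and K :: "nat \<Rightarrow> real"
  assumes f: "set_integrable M A f" and [measurable]: "u \<in> borel_measurable M" and "0 \<le> c"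
    and K: "filterlim K at_top sequentially"
  shows "(\<lambda>n. LINT x:A|M. f x * trunc c (u x - trunc (K n) (u x))) \<longlonglongrightarrow> 0"
proof -
  let ?F = "\<lambda>x. indicator A x *\<^sub>R f x"
  have int: "integrable M ?F"
    using f by (simp add: set_integrable_def)
  then have [measurable]: "?F \<in> borel_measurable M"
    by (rule borel_measurable_integrable)
  have "(\<lambda>n. integral\<^sup>L M (\<lambda>x. ?F x * trunc c (u x - trunc (K n) (u x)))) \<longlonglongrightarrow> integral\<^sup>L M (\<lambda>x. 0)"
  proof (rule integral_dominated_convergence[where w = "\<lambda>x. c * norm (?F x)"])
    show "integrable M (\<lambda>x. c * norm (?F x))"
      using int by (intro integrable_mult_right integrable_norm)
    show "AE x in M. (\<lambda>n. ?F x * trunc c (u x - trunc (K n) (u x))) \<longlonglongrightarrow> 0"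
    proof (rule AE_I2, rule tendsto_eventually)
      fix x
      show "\<forall>\<^sub>F n in sequentially. ?F x * trunc c (u x - trunc (K n) (u x)) = 0"
        using filterlim_at_top[THEN iffD1, OF K, rule_format, of "\<bar>u x\<bar>"]
        by eventually_elim (use \<open>0 \<le> c\<close> in \<open>simp add: trunc_eq_self\<close>)
    qed
    show "AE x in M. norm (?F x * trunc c (u x - trunc (K n) (u x))) \<le> c * norm (?F x)" for n
    proof (rule AE_I2)
      fix x
      have "\<bar>?F x\<bar> * \<bar>trunc c (u x - trunc (K n) (u x))\<bar> \<le> \<bar>?F x\<bar> * c"
        using \<open>0 \<le> c\<close> by (intro mult_left_mono abs_trunc_le) auto
      then show "norm (?F x * trunc c (u x - trunc (K n) (u x))) \<le> c * norm (?F x)"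
        by (metis abs_mult mult.commute real_norm_def)
    qed
  qed measurable
  then show ?thesis
    by (simp add: set_lebesgue_integral_def mult.assoc)
qed

definition nonlocal_pairing :: "real \<Rightarrow> ('a \<Rightarrow> real) \<Rightarrow> ('a \<Rightarrow> real) \<Rightarrow> 'a \<times> 'a \<Rightarrow> real" where
  "nonlocal_pairing p u G z = ppow p (u (fst z) - u (snd z)) * (G (fst z) - G (snd z))"

lemma borel_measurable_nonlocal_pairing [measurable]:
  assumes [measurable]: "u \<in> borel_measurable lebesgue" "G \<in> borel_measurable lebesgue"
  shows "nonlocal_pairing p u G \<in> borel_measurable (lebesgue \<Otimes>\<^sub>M lebesgue)"
  unfolding nonlocal_pairing_def by measurable

lemma nonlocal_pairing_mono_nonneg: "mono G \<Longrightarrow> 0 \<le> nonlocal_pairing p u (\<lambda>x. G (u x)) z"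
  unfolding nonlocal_pairing_def by (rule ppow_mult_mono_nonneg)

lemma entropy_solution_borel_measurable:
  "entropy_solution s p \<beta> \<Omega> f u \<Longrightarrow> u \<in> borel_measurable lebesgue"
  by (simp add: entropy_solution_def)

lemma entropy_solution_trunc_Wspace:
  "entropy_solution s p \<beta> \<Omega> f u \<Longrightarrow> 0 < k \<Longrightarrow> (\<lambda>x. trunc k (u x)) \<in> Wspace s p \<beta> \<Omega>"
  by (simp add: entropy_solution_def)

lemma entropy_solution_test:
  assumes "entropy_solution s p \<beta> \<Omega> f u" "0 < k" "\<phi> \<in> Wspace s p \<beta> \<Omega>" "ess_bounded \<phi>"
  shows "set_integrable (nu_meas s p \<beta>) (D_Omega \<Omega>) (nonlocal_pairing p u (\<lambda>x. trunc k (u x - \<phi> x)))"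
    and "1 / 2 * (LINT z : D_Omega \<Omega> | nu_meas s p \<beta>. nonlocal_pairing p u (\<lambda>x. trunc k (u x - \<phi> x)) z)
           \<le> (LINT x : \<Omega> | lebesgue. f x * trunc k (u x - \<phi> x))"
  using assms unfolding entropy_solution_def Let_def nonlocal_pairing_def[abs_def] by blast+

lemma entropy_solution_pairing_le_tail:
  fixes \<Omega> :: "'a::euclidean_space set" and f u w :: "'a \<Rightarrow> real"
  assumes "0 < p" and \<Omega>: "\<Omega> \<in> sets lebesgue" and f: "set_integrable lebesgue \<Omega> f"
    and u: "AE x in lebesgue. 0 \<le> u x" and E: "entropy_solution s p \<beta> \<Omega> f u"
    and w: "w \<in> Wspace s p \<beta> \<Omega>" and w_bound: "AE x in lebesgue. \<bar>w x\<bar> \<le> M" and "0 < M"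
    and w_supp: "AE x in lebesgue. k < u x \<longrightarrow> w x = 0" and "0 < K" "k \<le> K"
  defines "H \<equiv> \<lambda>x. trunc M (u x - trunc K (u x))"
  shows "set_integrable (nu_meas s p \<beta>) (D_Omega \<Omega>) (nonlocal_pairing p u w)"
    and "1 / 2 * (LINT z : D_Omega \<Omega> | nu_meas s p \<beta>. nonlocal_pairing p u w z)
           \<le> (LINT x : \<Omega> | lebesgue. f x * w x) + (LINT x : \<Omega> | lebesgue. f x * H x)"
proof -
  have [measurable]: "u \<in> borel_measurable lebesgue" "w \<in> borel_measurable lebesgue"
    using E w by (auto simp: Wspace_def entropy_solution_borel_measurable)
  then have [measurable]: "H \<in> borel_measurable lebesgue"
    unfolding H_def by measurable
  define \<phi> where "\<phi> x = trunc K (u x) - w x" for x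
  have TK: "(\<lambda>x. trunc K (u x)) \<in> Wspace s p \<beta> \<Omega>" "ess_bounded (\<lambda>x. trunc K (u x))"
    using entropy_solution_trunc_Wspace[OF E \<open>0 < K\<close>] abs_trunc_le \<open>0 < K\<close>
    by (auto simp: ess_bounded_def intro!: exI[of _ K])
  have \<phi>_Wspace: "\<phi> \<in> Wspace s p \<beta> \<Omega>"
    unfolding \<phi>_def using Wspace_diff[OF _ \<Omega> TK(1) w] \<open>0 < p\<close> by simp
  have \<phi>_bounded: "ess_bounded \<phi>"
    unfolding ess_bounded_def
  proof
    show "AE x in lebesgue. \<bar>\<phi> x\<bar> \<le> K + M"
      using w_bound
    proof eventually_elim
      case (elim x)
      then show ?case
        using abs_trunc_le[of K "u x"] \<open>0 < K\<close> unfolding \<phi>_def by linarith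
    qed
  qed
  note test = entropy_solution_test[OF E \<open>0 < M\<close> \<phi>_Wspace \<phi>_bounded]
  \<comment> \<open>testing with \<open>T\<^sub>K u\<close> itself makes the pairing with \<open>H\<close> integrable\<close>
  note test_H = entropy_solution_test[OF E \<open>0 < M\<close> TK, folded H_def]
  have split: "AE x in lebesgue. trunc M (u x - \<phi> x) = w x + H x"
    using u w_bound w_supp
    by eventually_elim (use \<open>k \<le> K\<close> in \<open>simp add: \<phi>_def H_def trunc_test_function_eq\<close>)
  have pairing_split: "AE z in nu_meas s p \<beta>.
      nonlocal_pairing p u (\<lambda>x. trunc M (u x - \<phi> x)) z = nonlocal_pairing p u w z + nonlocal_pairing p u H z"
    using AE_nu_meas[OF split] by eventually_elim (simp add: nonlocal_pairing_def algebra_simps)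
  have D: "D_Omega \<Omega> \<in> sets (nu_meas s p \<beta>)"
    using \<Omega> by (rule D_Omega_in_sets)
  have \<phi>_meas [measurable]: "\<phi> \<in> borel_measurable lebesgue"
    unfolding \<phi>_def by measurable
  note pairing_w = set_integral_eq_diff_AE[OF D _ _ _ test(1) test_H(1) pairing_split, simplified]
  show "set_integrable (nu_meas s p \<beta>) (D_Omega \<Omega>) (nonlocal_pairing p u w)"
    using pairing_w(1) by measurable
  have "0 \<le> nonlocal_pairing p u H z" for z
    unfolding H_def using \<open>0 < K\<close> by (intro nonlocal_pairing_mono_nonneg mono_trunc_tail) simp
  then have "0 \<le> (LINT z : D_Omega \<Omega> | nu_meas s p \<beta>. nonlocal_pairing p u H z)"
    unfolding set_lebesgue_integral_def by (intro integral_nonneg_AE AE_I2) (simp add: indicator_def)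
  moreover have "(LINT x : \<Omega> | lebesgue. f x * trunc M (u x - \<phi> x))
      = (LINT x : \<Omega> | lebesgue. f x * w x) + (LINT x : \<Omega> | lebesgue. f x * H x)"
  proof -
    have "AE x in lebesgue. \<bar>H x\<bar> \<le> M"
      using \<open>0 < M\<close> by (simp add: H_def abs_trunc_le)
    then have "set_integrable lebesgue \<Omega> (\<lambda>x. f x * w x)" "set_integrable lebesgue \<Omega> (\<lambda>x. f x * H x)"
      using set_integrable_mult_bounded[OF f] w_bound by auto
    moreover have "(LINT x : \<Omega> | lebesgue. f x * trunc M (u x - \<phi> x))
        = (LINT x : \<Omega> | lebesgue. f x * (w x + H x))"
      by (rule set_integral_mult_cong_AE[OF f _ _ split]) measurable
    ultimately show ?thesis
      by (simp add: distrib_left)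
  qed
  ultimately show "1 / 2 * (LINT z : D_Omega \<Omega> | nu_meas s p \<beta>. nonlocal_pairing p u w z)
      \<le> (LINT x : \<Omega> | lebesgue. f x * w x) + (LINT x : \<Omega> | lebesgue. f x * H x)"
    using pairing_w(2) test(2) by simp
qed

lemma entropy_solution_pairing_le:
  fixes \<Omega> :: "'a::euclidean_space set" and f u w :: "'a \<Rightarrow> real"
  assumes "0 < p" and \<Omega>: "\<Omega> \<in> sets lebesgue" and f: "set_integrable lebesgue \<Omega> f"
    and u: "AE x in lebesgue. 0 \<le> u x" and E: "entropy_solution s p \<beta> \<Omega> f u"
    and w: "w \<in> Wspace s p \<beta> \<Omega>" "ess_bounded w"
    and "0 < k" and w_supp: "AE x in lebesgue. k < u x \<longrightarrow> w x = 0"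
  shows "set_integrable (nu_meas s p \<beta>) (D_Omega \<Omega>) (nonlocal_pairing p u w)"
    and "1 / 2 * (LINT z : D_Omega \<Omega> | nu_meas s p \<beta>. nonlocal_pairing p u w z)
           \<le> (LINT x : \<Omega> | lebesgue. f x * w x)"
proof -
  obtain C where "AE x in lebesgue. \<bar>w x\<bar> \<le> C"
    using w(2) unfolding ess_bounded_def by blast
  then have w_bound: "AE x in lebesgue. \<bar>w x\<bar> \<le> max C 1"
    by (rule eventually_mono) simp
  note tail = entropy_solution_pairing_le_tail[OF \<open>0 < p\<close> \<Omega> f u E w(1) w_bound _ w_supp,
      where K = "k + real n" for n]
  show "set_integrable (nu_meas s p \<beta>) (D_Omega \<Omega>) (nonlocal_pairing p u w)"
    using tail(1)[of 0] \<open>0 < k\<close> by simp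
  have "(\<lambda>n. (LINT x : \<Omega> | lebesgue. f x * w x)
          + (LINT x : \<Omega> | lebesgue. f x * trunc (max C 1) (u x - trunc (k + real n) (u x))))
        \<longlonglongrightarrow> (LINT x : \<Omega> | lebesgue. f x * w x) + 0"
    using E by (intro tendsto_add tendsto_const tendsto_set_integral_trunc_tail[OF f]
        filterlim_tendsto_add_at_top[OF tendsto_const filterlim_real_sequentially])
      (simp_all add: entropy_solution_borel_measurable)
  then have "1 / 2 * (LINT z : D_Omega \<Omega> | nu_meas s p \<beta>. nonlocal_pairing p u w z)
      \<le> (LINT x : \<Omega> | lebesgue. f x * w x) + 0"
    by (rule LIMSEQ_le_const) (use tail(2) \<open>0 < k\<close> in auto)
  then show "1 / 2 * (LINT z : D_Omega \<Omega> | nu_meas s p \<beta>. nonlocal_pairing p u w z)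
      \<le> (LINT x : \<Omega> | lebesgue. f x * w x)"
    by simp
qed

theorem lemma3p7:
  fixes s p \<beta> k :: real and \<Omega> :: "'a::euclidean_space set" and f u w :: "'a \<Rightarrow> real"
  assumes "0 < s" "s < 1" "1 < p" "p < real DIM('a)" "p * s < real DIM('a)"
    and "0 \<le> \<beta>" "\<beta> < (real DIM('a) - p * s) / 2"
    and \<Omega>: "smooth_bounded_domain \<Omega>" "0 \<in> \<Omega>"
    and f: "set_integrable lebesgue \<Omega> f"
    and "AE x in lebesgue. x \<in> \<Omega> \<longrightarrow> 0 \<le> f x"
    and "\<not> (AE x in lebesgue. x \<in> \<Omega> \<longrightarrow> f x = 0)"
    and u: "AE x in lebesgue. 0 \<le> u x"
    and E: "entropy_solution s p \<beta> \<Omega> f u"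
    and w: "w \<in> Wspace s p \<beta> \<Omega>" "ess_bounded w"
    and k: "0 < k" and w_supp: "AE x in lebesgue. k < u x \<longrightarrow> w x = 0"
  shows "set_integrable (nu_meas s p \<beta>) (D_Omega \<Omega>)
           (\<lambda>z. ppow p (u (fst z) - u (snd z)) * (w (fst z) - w (snd z))) \<and>
         1 / 2 * (LINT z : D_Omega \<Omega> | nu_meas s p \<beta>.
                   ppow p (u (fst z) - u (snd z)) * (w (fst z) - w (snd z)))
         = (LINT x : \<Omega> | lebesgue. f x * w x)"
proof -
  have p: "0 < p" using \<open>1 < p\<close> by simp
  have \<Omega>_sets: "\<Omega> \<in> sets lebesgue"
    using \<Omega>(1) by (simp add: smooth_bounded_domain_def borel_open)
  note le = entropy_solution_pairing_le[OF p \<Omega>_sets f u E w k w_supp]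
  have "(\<lambda>x. 0 - w x) \<in> Wspace s p \<beta> \<Omega>"
    by (rule Wspace_diff[OF p \<Omega>_sets Wspace_const_zero w(1)])
  moreover have "ess_bounded (\<lambda>x. 0 - w x)"
    using w(2) by (simp add: ess_bounded_def)
  moreover have "AE x in lebesgue. k < u x \<longrightarrow> 0 - w x = 0"
    using w_supp by (rule eventually_mono) simp
  ultimately have "1 / 2 * (LINT z : D_Omega \<Omega> | nu_meas s p \<beta>. nonlocal_pairing p u (\<lambda>x. 0 - w x) z)
      \<le> (LINT x : \<Omega> | lebesgue. f x * (0 - w x))"
    by (rule entropy_solution_pairing_le(2)[OF p \<Omega>_sets f u E _ _ k])
  moreover have "nonlocal_pairing p u (\<lambda>x. 0 - w x) z = - nonlocal_pairing p u w z" for z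
    by (simp add: nonlocal_pairing_def algebra_simps)
  ultimately have "(LINT x : \<Omega> | lebesgue. f x * w x)
      \<le> 1 / 2 * (LINT z : D_Omega \<Omega> | nu_meas s p \<beta>. nonlocal_pairing p u w z)"
    by (simp add: set_integral_uminus[OF le(1)] set_lebesgue_integral_def)
  with le show ?thesis
    unfolding nonlocal_pairing_def[abs_def] by simp
qed

end
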